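(* Let $G_1$ and $G_2$ be graphs admitting arithmetic IASIs. Then the corona $G_1\circ G_2$ admits an arithmetic IASI (in which $G_1$ and each copy of $G_2$ carry labels with the deterministic indices of the given labelings) if and only if the deterministic index of every vertex of one graph is $k$ times or $1/k$ times the deterministic index of every vertex of the other, for a positive integer $k$ at most the set-indexing number of the vertex having the smaller deterministic index.
   Context: All graphs are simple, finite, with no isolated vertices; all sets are finite subsets of $\mathbb{N}_0$; $A+B=\{a+b:a\in A,b\in B\}$. An IASI of $G$ is an injective $f:V(G)\to 2^{\mathbb{N}_0}$ with $g_f(uv)=f(u)+f(v)$ injective on $E(G)$. The set-indexing number of an element is the cardinality of its set-label. An AP-set is a set whose elements form an arithmetic progression; the common difference of the set-label of an element is its deterministic index. An arithmetic IASI is an IASI under which all vertex and edge set-labels are AP-sets. The corona $G_1\circ G_2$ is obtained from one copy of $G_1$ (with $p_1$ vertices) and $p_1$ copies of $G_2$ by joining the $i$-th vertex of $G_1$ to every vertex of the $i$-th copy of $G_2$. *)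

theory Defs
  imports Main
begin

definition simple_graph :: "'a set \<Rightarrow> 'a set set \<Rightarrow> bool" where
  "simple_graph V E \<longleftrightarrow> finite V \<and>
     (\<forall>e\<in>E. \<exists>u v. u \<noteq> v \<and> u \<in> V \<and> v \<in> V \<and> e = {u, v}) \<and>
     (\<forall>v\<in>V. \<exists>e\<in>E. v \<in> e)"

definition sumset :: "nat set \<Rightarrow> nat set \<Rightarrow> nat set" where
  "sumset A B = {a + b | a b. a \<in> A \<and> b \<in> B}"

definition IASI :: "'a set \<Rightarrow> 'a set set \<Rightarrow> ('a \<Rightarrow> nat set) \<Rightarrow> bool" where
  "IASI V E f \<longleftrightarrow> inj_on f V \<and> (\<forall>v\<in>V. finite (f v)) \<and>
     (\<forall>u v x y. {u, v} \<in> E \<longrightarrow> {x, y} \<in> E \<longrightarrow>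
        sumset (f u) (f v) = sumset (f x) (f y) \<longrightarrow> {u, v} = {x, y})"

definition AP_set :: "nat set \<Rightarrow> bool" where
  "AP_set A \<longleftrightarrow> (\<exists>a d n. d > 0 \<and> n \<ge> 2 \<and> A = {a + d * i | i. i < n})"

definition det_index :: "nat set \<Rightarrow> nat" where
  "det_index A = (THE d. \<exists>a n. d > 0 \<and> n \<ge> 2 \<and> A = {a + d * i | i. i < n})"

abbreviation set_indexing_number :: "nat set \<Rightarrow> nat" where
  "set_indexing_number A \<equiv> card A"

definition arithmetic_IASI :: "'a set \<Rightarrow> 'a set set \<Rightarrow> ('a \<Rightarrow> nat set) \<Rightarrow> bool" where
  "arithmetic_IASI V E f \<longleftrightarrow> IASI V E f \<and> (\<forall>v\<in>V. AP_set (f v)) \<and>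
     (\<forall>u v. {u, v} \<in> E \<longrightarrow> AP_set (sumset (f u) (f v)))"

text \<open>Corona G1 o G2: vertex Inl u is the vertex u of G1, vertex Inr (u, w) is the copy
  of vertex w of G2 in the copy attached to u.\<close>
definition corona_V :: "'a set \<Rightarrow> 'b set \<Rightarrow> ('a + 'a \<times> 'b) set" where
  "corona_V V1 V2 = Inl ` V1 \<union> Inr ` (V1 \<times> V2)"

definition corona_E :: "'a set \<Rightarrow> 'a set set \<Rightarrow> 'b set \<Rightarrow> 'b set set \<Rightarrow> ('a + 'a \<times> 'b) set set" where
  "corona_E V1 E1 V2 E2 =
     {{Inl u, Inl v} | u v. {u, v} \<in> E1} \<union>
     {{Inr (u, w), Inr (u, w')} | u w w'. u \<in> V1 \<and> {w, w'} \<in> E2} \<union>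
     {{Inl u, Inr (u, w)} | u w. u \<in> V1 \<and> w \<in> V2}"

end

theory Submission
  imports Defs
begin

(* Write ap a d n for the arithmetic progression a, a+d, ..., a+(n-1)d.
   Every AP-set A equals ap a (det_index A) (card A) for some a, so an AP-labelling
   is determined by start points, deterministic indices and set-indexing numbers.
   The heart of the argument is the arithmetic fact that for d, e > 0 and n, m >= 2
   the sumset ap a d n + ap b e m is an AP-set iff the two progressions are
   "compatible": one difference is k times the other, with 0 < k at most the length
   of the progression with the smaller difference.
   From this we get, for an arbitrary simple graph: (1) any arithmetic IASI has
   compatible labels on the ends of every edge, and (2) conversely any prescription
   of indices and lengths that is compatible along all edges is realised by an
   arithmetic IASI, choosing pairwise distinct powers of two as start points
   (two-element sums of distinct powers of two determine the summands, which makes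
   the edge labels distinct).  The theorem follows by applying (1) to the edges
   joining G1 to the copies of G2, and (2) to the corona, whose remaining edges
   are compatible because G1 and G2 already carry arithmetic IASIs. *)

section \<open>Finite arithmetic progressions\<close>

definition ap :: "nat \<Rightarrow> nat \<Rightarrow> nat \<Rightarrow> nat set" where
  "ap a d n = (\<lambda>i. a + d * i) ` {..<n}"

lemma ap_eq_Collect: "{a + d * i | i. i < n} = ap a d n"
  unfolding ap_def by auto

lemma mem_ap: "x \<in> ap a d n \<longleftrightarrow> (\<exists>i<n. x = a + d * i)"
  unfolding ap_def by auto

lemma finite_ap: "finite (ap a d n)"
  unfolding ap_def by simp

lemma card_ap: "d > 0 \<Longrightarrow> card (ap a d n) = n"
  unfolding ap_def by (subst card_image) (auto simp: inj_on_def)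

lemma start_mem_ap: "n \<ge> 1 \<Longrightarrow> a \<in> ap a d n"
  unfolding ap_def by (rule image_eqI[where x = "0::nat"]) auto

lemma Min_ap: "n \<ge> 1 \<Longrightarrow> Min (ap a d n) = a"
  by (rule Min_eqI) (auto simp: finite_ap start_mem_ap ap_def)

lemma AP_set_iff: "AP_set A \<longleftrightarrow> (\<exists>a d n. d > 0 \<and> n \<ge> 2 \<and> A = ap a d n)"
  unfolding AP_set_def ap_eq_Collect ..

text \<open>A progression of length at least two determines its common difference: it is
  the gap between its two least elements.\<close>
lemma ap_eq_imp_diff_le:
  assumes eq: "ap a d n = ap a' d' n'" and "n \<ge> 2" "n' \<ge> 2" "d > 0" "d' > 0"
  shows "d' \<le> d"
proof -
  have "a = a'" using Min_ap[of n a d] Min_ap[of n' a' d'] eq assms by simp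
  moreover have "a + d \<in> ap a d n"
    unfolding mem_ap using assms by (intro exI[of _ 1]) auto
  then obtain i where "a + d = a' + d' * i" unfolding eq mem_ap by blast
  ultimately show ?thesis
    using assms by (cases i) auto
qed

lemma det_index_ap: "d > 0 \<Longrightarrow> n \<ge> 2 \<Longrightarrow> det_index (ap a d n) = d"
  unfolding det_index_def ap_eq_Collect
proof (rule the_equality)
  fix d' assume "d > 0" "n \<ge> 2" "\<exists>a' n'. d' > 0 \<and> n' \<ge> 2 \<and> ap a d n = ap a' d' n'"
  then show "d' = d"
    by (metis ap_eq_imp_diff_le antisym)
qed blast

lemma AP_set_imp_ap:
  assumes "AP_set A"
  shows "det_index A > 0 \<and> card A \<ge> 2 \<and> (\<exists>a. A = ap a (det_index A) (card A))"
proof -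
  obtain a d n where "d > 0" "n \<ge> 2" "A = ap a d n"
    using assms unfolding AP_set_iff by blast
  then show ?thesis using det_index_ap card_ap by auto
qed

lemma sumset_commute: "sumset A B = sumset B A"
  unfolding sumset_def by (auto; metis add.commute)

lemma finite_sumset: "finite A \<Longrightarrow> finite B \<Longrightarrow> finite (sumset A B)"
proof -
  have "sumset A B = (\<lambda>(a, b). a + b) ` (A \<times> B)" unfolding sumset_def by auto
  then show "finite A \<Longrightarrow> finite B \<Longrightarrow> finite (sumset A B)" by simp
qed

lemma Min_sumset:
  assumes "finite A" "finite B" "A \<noteq> {}" "B \<noteq> {}"
  shows "Min (sumset A B) = Min A + Min B"
proof (rule Min_eqI)
  show "finite (sumset A B)" using assms by (simp add: finite_sumset)
  show "Min A + Min B \<in> sumset A B" unfolding sumset_def using assms by (blast intro: Min_in)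
  fix x assume "x \<in> sumset A B"
  then obtain a b where "a \<in> A" "b \<in> B" "x = a + b" unfolding sumset_def by blast
  then show "Min A + Min B \<le> x" using assms by (simp add: add_mono)
qed

lemma sumset_shift: "sumset ((+) a ` A) ((+) b ` B) = (+) (a + b) ` sumset A B"
proof (rule set_eqI)
  fix z :: nat
  have "z \<in> sumset ((+) a ` A) ((+) b ` B) \<longleftrightarrow> (\<exists>x\<in>A. \<exists>y\<in>B. z = (a + x) + (b + y))"
    unfolding sumset_def by blast
  also have "\<dots> \<longleftrightarrow> (\<exists>x\<in>A. \<exists>y\<in>B. z = (a + b) + (x + y))"
    by (simp add: ac_simps)
  also have "\<dots> \<longleftrightarrow> z \<in> (+) (a + b) ` sumset A B"
    unfolding sumset_def by blast
  finally show "z \<in> sumset ((+) a ` A) ((+) b ` B) \<longleftrightarrow> z \<in> (+) (a + b) ` sumset A B" .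
qed

lemma ap_shift: "ap a d n = (+) a ` ap 0 d n"
  unfolding ap_def by auto

lemma AP_set_shift: "AP_set ((+) c ` A) \<longleftrightarrow> AP_set A"
proof
  assume "AP_set A"
  then obtain a d n where "d > 0" "n \<ge> 2" "A = ap a d n" unfolding AP_set_iff by blast
  then show "AP_set ((+) c ` A)" unfolding AP_set_iff
    by (intro exI[of _ "c + a"] exI[of _ d] exI[of _ n]) (auto simp: ap_def image_image add.assoc)
next
  assume "AP_set ((+) c ` A)"
  then obtain a d n where h: "d > 0" "n \<ge> 2" "(+) c ` A = ap a d n" unfolding AP_set_iff by blast
  have "a \<in> (+) c ` A" using h start_mem_ap[of n a d] by simp
  then have "c \<le> a" by auto
  have "x \<in> A \<longleftrightarrow> c + x \<in> ap a d n" for x using h(3) by (metis add_left_cancel image_iff)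
  with \<open>c \<le> a\<close> have "A = ap (a - c) d n" by (auto simp: set_eq_iff mem_ap)
  then show "AP_set A" unfolding AP_set_iff using h by blast
qed

section \<open>When is the sum of two progressions a progression?\<close>

definition compatible :: "nat \<Rightarrow> nat \<Rightarrow> nat \<Rightarrow> nat \<Rightarrow> bool" where
  "compatible d n e m \<longleftrightarrow> (\<exists>k::nat. k > 0 \<and> ((e = k * d \<and> k \<le> n) \<or> (d = k * e \<and> k \<le> m)))"

lemma compatible_sym: "compatible d n e m \<longleftrightarrow> compatible e m d n"
  unfolding compatible_def by blast

lemma mem_sumset_ap:
  "x \<in> sumset (ap a d n) (ap b e m) \<longleftrightarrow> (\<exists>i<n. \<exists>j<m. x = (a + d * i) + (b + e * j))"
  unfolding sumset_def mem_ap by blast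

text \<open>Sufficiency: if e = k d with 0 < k \<le> n, the sumset fills the progression of
  difference d without gaps; index t = i + k j is reached with j = min (t div k) (m-1).\<close>
lemma sumset_ap_multiple:
  assumes "e = k * d" "0 < k" "k \<le> n" "m \<ge> 1"
  shows "sumset (ap 0 d n) (ap 0 e m) = ap 0 d (n + k * (m - 1))"
proof (rule set_eqI)
  fix x
  show "x \<in> sumset (ap 0 d n) (ap 0 e m) \<longleftrightarrow> x \<in> ap 0 d (n + k * (m - 1))"
  proof
    assume "x \<in> sumset (ap 0 d n) (ap 0 e m)"
    then obtain i j where ij: "i < n" "j < m" "x = d * i + e * j" unfolding mem_sumset_ap by auto
    have "k * j \<le> k * (m - 1)" using ij by (intro mult_le_mono2) simp
    then have "i + k * j < n + k * (m - 1)" using ij by linarith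
    moreover have "x = d * (i + k * j)" using ij assms by (simp add: algebra_simps)
    ultimately show "x \<in> ap 0 d (n + k * (m - 1))" unfolding mem_ap by auto
  next
    assume "x \<in> ap 0 d (n + k * (m - 1))"
    then obtain t where t: "t < n + k * (m - 1)" "x = d * t" unfolding mem_ap by auto
    define j where "j = min (t div k) (m - 1)"
    have "k * j \<le> k * (t div k)" unfolding j_def by (intro mult_le_mono2) simp
    also have "\<dots> \<le> t" by (rule times_div_less_eq_dividend)
    finally have kj: "k * j \<le> t" .
    have "t - k * j < n"
    proof (cases "t div k \<le> m - 1")
      case True
      then have "t - k * j = t mod k" unfolding j_def by (simp add: minus_mult_div_eq_mod)
      then show ?thesis using assms by (metis mod_less_divisor order_less_le_trans)
    next
      case False
      then have "j = m - 1" unfolding j_def by simp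
      moreover have "t - k * (m - 1) < n" using t assms by linarith
      ultimately show ?thesis by simp
    qed
    moreover have "j < m" unfolding j_def using assms by simp
    moreover have "x = d * (t - k * j) + e * j" using kj t assms by (simp add: algebra_simps)
    ultimately show "x \<in> sumset (ap 0 d n) (ap 0 e m)" unfolding mem_sumset_ap by auto
  qed
qed

text \<open>Necessity, first step: if the sumset is an AP-set and d \<le> e, then it is the
  progression starting at 0 with difference d (its two least elements are 0 and d).\<close>
lemma AP_sumset_ap_diff:
  assumes "AP_set (sumset (ap 0 d n) (ap 0 e m))" "d \<le> e" "d > 0" "n \<ge> 2" "m \<ge> 2"
  obtains N where "sumset (ap 0 d n) (ap 0 e m) = ap 0 d N"
proof -
  let ?S = "sumset (ap 0 d n) (ap 0 e m)"
  obtain a c N where c: "c > 0" "N \<ge> 2" "?S = ap a c N" using assms(1) unfolding AP_set_iff by blast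
  have S: "x \<in> ?S \<longleftrightarrow> (\<exists>i<n. \<exists>j<m. x = d * i + e * j)" for x unfolding mem_sumset_ap by simp
  have "ap 0 d n \<noteq> {}" "ap 0 e m \<noteq> {}"
    using start_mem_ap[of n 0 d] start_mem_ap[of m 0 e] assms by auto
  then have "a = 0"
    using Min_ap[of N a c] Min_sumset[of "ap 0 d n" "ap 0 e m"] Min_ap[of n 0 d] Min_ap[of m 0 e] c assms
    by (auto simp: finite_ap mem_ap)
  have "a + c * 1 \<in> ?S" unfolding c(3) mem_ap using c by auto
  then obtain i j where ij: "i < n" "j < m" "c = d * i + e * j" unfolding S \<open>a = 0\<close> by auto
  then have "d \<le> c" using c assms by (cases i; cases j) (auto intro: trans_le_add1)
  have "d \<in> ?S" unfolding S using assms by (intro exI[of _ 1] exI[of _ 0]) auto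
  then obtain i' where "d = c * i'" using \<open>a = 0\<close> c(3) by (auto simp: mem_ap)
  then have "c \<le> d" using assms by (cases i') auto
  with \<open>d \<le> c\<close> have "?S = ap 0 d N" using c(3) \<open>a = 0\<close> by simp
  then show thesis by (rule that)
qed

text \<open>Necessity: with d \<le> e, e must be a multiple k d with k \<le> n; otherwise d n would
  lie in the gap between d (n - 1) and d (n - 1) + e.\<close>
lemma AP_sumset_imp_multiple:
  assumes AP: "AP_set (sumset (ap 0 d n) (ap 0 e m))" and "d \<le> e" "d > 0" "n \<ge> 2" "m \<ge> 2"
  shows "\<exists>k>0. e = k * d \<and> k \<le> n"
proof -
  let ?S = "sumset (ap 0 d n) (ap 0 e m)"
  obtain N where N: "?S = ap 0 d N" using AP_sumset_ap_diff[OF assms] .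
  have S: "x \<in> ?S \<longleftrightarrow> (\<exists>i<n. \<exists>j<m. x = d * i + e * j)" for x unfolding mem_sumset_ap by simp
  have "e \<in> ?S" unfolding S using assms by (intro exI[of _ 0] exI[of _ 1]) auto
  then obtain k where k: "e = d * k" unfolding N mem_ap by auto
  then have "k > 0" using assms by (cases k) auto
  have "k \<le> n"
  proof (rule ccontr)
    assume "\<not> k \<le> n"
    have "d * (n - 1) + e \<in> ?S" unfolding S using assms by (intro exI[of _ "n - 1"] exI[of _ 1]) auto
    then obtain t where t: "t < N" "d * (n - 1) + e = d * t" unfolding N mem_ap by auto
    moreover have "d * (n - 1) + e = d * (n - 1 + k)" using k by (simp add: distrib_left)
    ultimately have "t = n - 1 + k" using assms by simp
    then have "n < N" using t \<open>\<not> k \<le> n\<close> by linarith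
    then have "d * n \<in> ?S" unfolding N mem_ap by (intro exI[of _ n]) simp
    then obtain i j where ij: "i < n" "j < m" "d * n = d * i + e * j" unfolding S by auto
    then have "d * n = d * (i + k * j)" using k by (simp add: algebra_simps)
    then have "n = i + k * j" using assms by simp
    moreover have "j \<noteq> 0" using ij \<open>n = i + k * j\<close> by auto
    then have "k \<le> k * j" by simp
    ultimately show False using \<open>\<not> k \<le> n\<close> by linarith
  qed
  then show ?thesis using k \<open>k > 0\<close> by (auto simp: mult.commute)
qed

theorem AP_sumset_ap_iff:
  assumes "d > 0" "e > 0" "n \<ge> 2" "m \<ge> 2"
  shows "AP_set (sumset (ap a d n) (ap b e m)) \<longleftrightarrow> compatible d n e m"
proof -
  have shift: "sumset (ap a d n) (ap b e m) = (+) (a + b) ` sumset (ap 0 d n) (ap 0 e m)"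
    by (simp only: ap_shift[of a d n] ap_shift[of b e m] sumset_shift)
  have "AP_set (sumset (ap 0 d n) (ap 0 e m)) \<longleftrightarrow> compatible d n e m"
  proof
    assume AP: "AP_set (sumset (ap 0 d n) (ap 0 e m))"
    show "compatible d n e m"
    proof (cases "d \<le> e")
      case True
      then show ?thesis using AP_sumset_imp_multiple[OF AP] assms unfolding compatible_def by blast
    next
      case False
      have "AP_set (sumset (ap 0 e m) (ap 0 d n))" using AP by (simp only: sumset_commute)
      then show ?thesis using AP_sumset_imp_multiple[of e m d n] False assms
        unfolding compatible_def by auto
    qed
  next
    assume "compatible d n e m"
    then obtain k where "k > 0" "(e = k * d \<and> k \<le> n) \<or> (d = k * e \<and> k \<le> m)"
      unfolding compatible_def by blast
    then show "AP_set (sumset (ap 0 d n) (ap 0 e m))"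
    proof (elim disjE conjE)
      assume "e = k * d" "k \<le> n"
      then have "sumset (ap 0 d n) (ap 0 e m) = ap 0 d (n + k * (m - 1))"
        using sumset_ap_multiple \<open>k > 0\<close> assms by simp
      moreover have "n + k * (m - 1) \<ge> 2" using assms by simp
      ultimately show ?thesis unfolding AP_set_iff using assms by blast
    next
      assume "d = k * e" "k \<le> m"
      then have "sumset (ap 0 e m) (ap 0 d n) = ap 0 e (m + k * (n - 1))"
        using sumset_ap_multiple \<open>k > 0\<close> assms by simp
      moreover have "m + k * (n - 1) \<ge> 2" using assms by simp
      ultimately show ?thesis unfolding AP_set_iff using assms sumset_commute by metis
    qed
  qed
  then show ?thesis unfolding shift AP_set_shift .
qed

section \<open>Sums of two distinct powers of two\<close>

lemma sum_two_powers_ordered: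
  assumes "i < j" "k < l" "(2::nat) ^ i + 2 ^ j = 2 ^ k + 2 ^ l"
  shows "i = k \<and> j = l"
proof -
  text \<open>If i < k, dividing by 2^i leaves an odd number on the left, an even one on the right.\<close>
  have no_smaller: False if "i < k" "i < j" "k < l" "(2::nat) ^ i + 2 ^ j = 2 ^ k + 2 ^ l" for i j k l
  proof -
    have "(2::nat) ^ i + 2 ^ j = 2 ^ i * (1 + 2 ^ (j - i))"
      using that by (simp add: algebra_simps flip: power_add)
    moreover have "(2::nat) ^ k + 2 ^ l = 2 ^ i * (2 ^ (k - i) * (1 + 2 ^ (l - k)))"
      using that by (simp add: algebra_simps flip: power_add)
    ultimately have "(2::nat) ^ i * (1 + 2 ^ (j - i)) = 2 ^ i * (2 ^ (k - i) * (1 + 2 ^ (l - k)))"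
      using that by simp
    then have "(1::nat) + 2 ^ (j - i) = 2 ^ (k - i) * (1 + 2 ^ (l - k))"
      by (metis mult_left_cancel power_not_zero zero_neq_numeral)
    moreover have "odd ((1::nat) + 2 ^ (j - i))" using that by simp
    ultimately show False using that by simp
  qed
  have "i = k" using no_smaller[of i k j l] no_smaller[of k i l j] assms by (metis linorder_neqE_nat)
  then show ?thesis using assms by simp
qed

text \<open>A sum of two distinct powers of two determines the two exponents; this is what
  makes the edge labels of the realising IASI pairwise distinct.\<close>
lemma sum_two_powers_inj:
  assumes "i \<noteq> j" "k \<noteq> l" "(2::nat) ^ i + 2 ^ j = 2 ^ k + 2 ^ l"
  shows "{i, j} = {k, l}"
  using sum_two_powers_ordered[of i j k l] sum_two_powers_ordered[of j i k l]
    sum_two_powers_ordered[of i j l k] sum_two_powers_ordered[of j i l k] assms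
  by (cases "i < j"; cases "k < l") (auto simp: add.commute insert_commute)

section \<open>Arithmetic IASIs on an arbitrary simple graph\<close>

lemma simple_graph_edge:
  "simple_graph V E \<Longrightarrow> {u, v} \<in> E \<Longrightarrow> u \<in> V \<and> v \<in> V \<and> u \<noteq> v"
  unfolding simple_graph_def by (metis doubleton_eq_iff)

lemma simple_graph_neighbour:
  assumes G: "simple_graph V E" and "u \<in> V"
  shows "\<exists>v. {u, v} \<in> E"
proof -
  obtain e where "e \<in> E" "u \<in> e" using assms unfolding simple_graph_def by blast
  moreover obtain a b where "e = {a, b}" using G \<open>e \<in> E\<close> unfolding simple_graph_def by blast
  ultimately have "{a, b} \<in> E" "u = a \<or> u = b" by auto
  then show ?thesis by (metis insert_commute)
qed

lemma arithmetic_IASI_edge_compatible: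
  assumes "simple_graph V E" "arithmetic_IASI V E f" "{u, v} \<in> E"
  shows "compatible (det_index (f u)) (card (f u)) (det_index (f v)) (card (f v))"
proof -
  have "u \<in> V" "v \<in> V" using simple_graph_edge[OF assms(1,3)] by auto
  then have "AP_set (f u)" "AP_set (f v)" using assms(2) unfolding arithmetic_IASI_def by auto
  then obtain a b where
    "det_index (f u) > 0" "card (f u) \<ge> 2" "f u = ap a (det_index (f u)) (card (f u))"
    "det_index (f v) > 0" "card (f v) \<ge> 2" "f v = ap b (det_index (f v)) (card (f v))"
    using AP_set_imp_ap by metis
  moreover have "AP_set (sumset (f u) (f v))" using assms(2,3) unfolding arithmetic_IASI_def by blast
  ultimately show ?thesis using AP_sumset_ap_iff by metis
qed

text \<open>Sufficiency: prescribed indices D and lengths N that are compatible along every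
  edge are realised by an arithmetic IASI, taking distinct powers of two as start
  points; the least element of an edge label then identifies the edge.\<close>
lemma arithmetic_IASI_realisation:
  fixes D N :: "'v \<Rightarrow> nat"
  assumes G: "simple_graph V E"
    and pos: "\<And>v. v \<in> V \<Longrightarrow> D v > 0 \<and> N v \<ge> 2"
    and compat: "\<And>u v. {u, v} \<in> E \<Longrightarrow> compatible (D u) (N u) (D v) (N v)"
  shows "\<exists>h. arithmetic_IASI V E h \<and> (\<forall>v\<in>V. det_index (h v) = D v \<and> card (h v) = N v)"
proof -
  obtain idx :: "'v \<Rightarrow> nat" where idx: "inj_on idx V"
    using G finite_imp_inj_to_nat_seg unfolding simple_graph_def by metis
  define h where "h v = ap (2 ^ idx v) (D v) (N v)" for v
  have Min_h: "Min (h v) = 2 ^ idx v" if "v \<in> V" for v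
    using pos[OF that] Min_ap unfolding h_def by simp
  have h_ne: "h v \<noteq> {}" if "v \<in> V" for v
    using pos[OF that] start_mem_ap[of "N v"] unfolding h_def by fastforce
  have inj: "inj_on h V"
    using idx by (auto simp: inj_on_def dest!: arg_cong[where f = Min] simp: Min_h)
  have edges_distinct: "{u, v} = {x, y}"
    if "{u, v} \<in> E" "{x, y} \<in> E" "sumset (h u) (h v) = sumset (h x) (h y)" for u v x y
  proof -
    have uv: "u \<in> V" "v \<in> V" "u \<noteq> v" and xy: "x \<in> V" "y \<in> V" "x \<noteq> y"
      using simple_graph_edge[OF G] that by auto
    have "(2::nat) ^ idx u + 2 ^ idx v = 2 ^ idx x + 2 ^ idx y"
      using that(3) Min_sumset uv xy h_ne Min_h by (metis finite_ap h_def)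
    moreover have "idx u \<noteq> idx v" "idx x \<noteq> idx y" using uv xy idx by (auto dest: inj_onD)
    ultimately have "{idx u, idx v} = {idx x, idx y}" by (rule sum_two_powers_inj[rotated 2])
    then show ?thesis using uv xy idx unfolding doubleton_eq_iff by (auto dest: inj_onD)
  qed
  have "IASI V E h" unfolding IASI_def using inj edges_distinct by (auto simp: h_def finite_ap)
  moreover have "AP_set (h v)" if "v \<in> V" for v
    using pos[OF that] unfolding h_def AP_set_iff by blast
  moreover have "AP_set (sumset (h u) (h v))" if "{u, v} \<in> E" for u v
    using AP_sumset_ap_iff pos simple_graph_edge[OF G that] compat[OF that] unfolding h_def by blast
  moreover have "det_index (h v) = D v \<and> card (h v) = N v" if "v \<in> V" for v
    using pos[OF that] det_index_ap card_ap unfolding h_def by auto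
  ultimately show ?thesis unfolding arithmetic_IASI_def by blast
qed

section \<open>The corona\<close>

lemma corona_E_G1: "{u, v} \<in> E1 \<Longrightarrow> {Inl u, Inl v} \<in> corona_E V1 E1 V2 E2"
  unfolding corona_E_def by blast

lemma corona_E_join: "u \<in> V1 \<Longrightarrow> w \<in> V2 \<Longrightarrow> {Inl u, Inr (u, w)} \<in> corona_E V1 E1 V2 E2"
  unfolding corona_E_def by blast

lemma simple_graph_corona:
  assumes "simple_graph V1 E1" "simple_graph V2 E2"
  shows "simple_graph (corona_V V1 V2) (corona_E V1 E1 V2 E2)"
  unfolding simple_graph_def
proof (intro conjI ballI)
  show "finite (corona_V V1 V2)" using assms unfolding simple_graph_def corona_V_def by auto
next
  fix e assume "e \<in> corona_E V1 E1 V2 E2"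
  then show "\<exists>x y. x \<noteq> y \<and> x \<in> corona_V V1 V2 \<and> y \<in> corona_V V1 V2 \<and> e = {x, y}"
    unfolding corona_E_def
  proof (elim UnE CollectE exE conjE)
    fix u v assume "e = {Inl u, Inl v}" "{u, v} \<in> E1"
    then show ?thesis using simple_graph_edge[OF assms(1)] unfolding corona_V_def
      by (intro exI[of _ "Inl u"] exI[of _ "Inl v"]) auto
  next
    fix u w w' assume "e = {Inr (u, w), Inr (u, w')}" "u \<in> V1" "{w, w'} \<in> E2"
    then show ?thesis using simple_graph_edge[OF assms(2)] unfolding corona_V_def
      by (intro exI[of _ "Inr (u, w)"] exI[of _ "Inr (u, w')"]) auto
  next
    fix u w assume "e = {Inl u, Inr (u, w)}" "u \<in> V1" "w \<in> V2"
    then show ?thesis unfolding corona_V_def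
      by (intro exI[of _ "Inl u"] exI[of _ "Inr (u, w)"]) auto
  qed
next
  fix x assume "x \<in> corona_V V1 V2"
  then show "\<exists>e\<in>corona_E V1 E1 V2 E2. x \<in> e"
  proof (cases x)
    case (Inl u)
    then have "u \<in> V1" using \<open>x \<in> _\<close> unfolding corona_V_def by auto
    then obtain v where "{u, v} \<in> E1" using simple_graph_neighbour[OF assms(1)] by blast
    then have "{Inl u, Inl v} \<in> corona_E V1 E1 V2 E2" by (rule corona_E_G1)
    then show ?thesis using Inl by blast
  next
    case (Inr p)
    then obtain u w where p: "p = (u, w)" "u \<in> V1" "w \<in> V2" using \<open>x \<in> _\<close> unfolding corona_V_def by auto
    then have "{Inl u, Inr (u, w)} \<in> corona_E V1 E1 V2 E2" by (intro corona_E_join)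
    then show ?thesis using Inr p by blast
  qed
qed

lemma corona_edge_induct:
  assumes "{x, y} \<in> corona_E V1 E1 V2 E2"
    and sym: "\<And>x y. P x y \<Longrightarrow> P y x"
    and inner1: "\<And>a b. {a, b} \<in> E1 \<Longrightarrow> P (Inl a) (Inl b)"
    and inner2: "\<And>u w w'. u \<in> V1 \<Longrightarrow> {w, w'} \<in> E2 \<Longrightarrow> P (Inr (u, w)) (Inr (u, w'))"
    and cross: "\<And>u w. u \<in> V1 \<Longrightarrow> w \<in> V2 \<Longrightarrow> P (Inl u) (Inr (u, w))"
  shows "P x y"
proof -
  have from_pair: "P x y" if "{x, y} = {a, b}" "P a b" for a b
    using that sym unfolding doubleton_eq_iff by blast
  from assms(1) show ?thesis unfolding corona_E_def
    by (elim UnE CollectE exE conjE) (blast intro: from_pair inner1 inner2 cross)+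
qed

section \<open>Labels inherited by the corona, and the main theorem\<close>

definition corona_index :: "('a \<Rightarrow> nat set) \<Rightarrow> ('b \<Rightarrow> nat set) \<Rightarrow> 'a + 'a \<times> 'b \<Rightarrow> nat" where
  "corona_index f1 f2 = case_sum (\<lambda>u. det_index (f1 u)) (\<lambda>p. det_index (f2 (snd p)))"

definition corona_length :: "('a \<Rightarrow> nat set) \<Rightarrow> ('b \<Rightarrow> nat set) \<Rightarrow> 'a + 'a \<times> 'b \<Rightarrow> nat" where
  "corona_length f1 f2 = case_sum (\<lambda>u. card (f1 u)) (\<lambda>p. card (f2 (snd p)))"

lemma corona_parameters_pos:
  assumes "arithmetic_IASI V1 E1 f1" "arithmetic_IASI V2 E2 f2" "x \<in> corona_V V1 V2"
  shows "corona_index f1 f2 x > 0 \<and> corona_length f1 f2 x \<ge> 2"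
  using assms AP_set_imp_ap
  unfolding corona_V_def corona_index_def corona_length_def arithmetic_IASI_def by auto

lemma corona_parameters_compatible:
  assumes "simple_graph V1 E1" "simple_graph V2 E2"
    and "arithmetic_IASI V1 E1 f1" "arithmetic_IASI V2 E2 f2"
    and join: "\<forall>u\<in>V1. \<forall>w\<in>V2.
      compatible (det_index (f1 u)) (card (f1 u)) (det_index (f2 w)) (card (f2 w))"
    and "{x, y} \<in> corona_E V1 E1 V2 E2"
  shows "compatible (corona_index f1 f2 x) (corona_length f1 f2 x)
                    (corona_index f1 f2 y) (corona_length f1 f2 y)"
  using assms(6)
proof (rule corona_edge_induct)
  fix x y
  assume "compatible (corona_index f1 f2 x) (corona_length f1 f2 x)
                     (corona_index f1 f2 y) (corona_length f1 f2 y)"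
  then show "compatible (corona_index f1 f2 y) (corona_length f1 f2 y)
                        (corona_index f1 f2 x) (corona_length f1 f2 x)"
    by (simp add: compatible_sym)
qed (use arithmetic_IASI_edge_compatible[OF assms(1,3)] arithmetic_IASI_edge_compatible[OF assms(2,4)]
       join in \<open>simp_all add: corona_index_def corona_length_def\<close>)

theorem mainTheorem10:
  fixes V1 :: "'a set" and E1 :: "'a set set" and f1 :: "'a \<Rightarrow> nat set"
    and V2 :: "'b set" and E2 :: "'b set set" and f2 :: "'b \<Rightarrow> nat set"
  assumes "simple_graph V1 E1" and "simple_graph V2 E2"
    and "arithmetic_IASI V1 E1 f1" and "arithmetic_IASI V2 E2 f2"
  shows "(\<exists>h. arithmetic_IASI (corona_V V1 V2) (corona_E V1 E1 V2 E2) h \<and>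
            (\<forall>u\<in>V1. det_index (h (Inl u)) = det_index (f1 u) \<and>
                      set_indexing_number (h (Inl u)) = set_indexing_number (f1 u)) \<and>
            (\<forall>u\<in>V1. \<forall>w\<in>V2. det_index (h (Inr (u, w))) = det_index (f2 w) \<and>
                      set_indexing_number (h (Inr (u, w))) = set_indexing_number (f2 w)))
         \<longleftrightarrow>
         (\<forall>u\<in>V1. \<forall>w\<in>V2. \<exists>k::nat. k > 0 \<and>
            ((det_index (f2 w) = k * det_index (f1 u) \<and> k \<le> set_indexing_number (f1 u)) \<or>
             (det_index (f1 u) = k * det_index (f2 w) \<and> k \<le> set_indexing_number (f2 w))))"
    (is "?L \<longleftrightarrow> ?R")
proof -
  have corona: "simple_graph (corona_V V1 V2) (corona_E V1 E1 V2 E2)"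
    using simple_graph_corona[OF assms(1,2)] .
  have R_iff: "?R \<longleftrightarrow> (\<forall>u\<in>V1. \<forall>w\<in>V2.
      compatible (det_index (f1 u)) (card (f1 u)) (det_index (f2 w)) (card (f2 w)))"
    unfolding compatible_def ..
  show ?thesis
  proof
    assume ?L
    then obtain h where h: "arithmetic_IASI (corona_V V1 V2) (corona_E V1 E1 V2 E2) h"
      and "\<forall>u\<in>V1. det_index (h (Inl u)) = det_index (f1 u) \<and> card (h (Inl u)) = card (f1 u)"
      and "\<forall>u\<in>V1. \<forall>w\<in>V2. det_index (h (Inr (u, w))) = det_index (f2 w) \<and>
                            card (h (Inr (u, w))) = card (f2 w)"
      by blast
    then show ?R
      unfolding R_iff using arithmetic_IASI_edge_compatible[OF corona h corona_E_join] by simp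
  next
    assume ?R
    obtain h where "arithmetic_IASI (corona_V V1 V2) (corona_E V1 E1 V2 E2) h"
      and "\<forall>x\<in>corona_V V1 V2. det_index (h x) = corona_index f1 f2 x \<and>
                             card (h x) = corona_length f1 f2 x"
      using arithmetic_IASI_realisation[where D = "corona_index f1 f2" and N = "corona_length f1 f2",
          OF corona corona_parameters_pos[OF assms(3,4)]
          corona_parameters_compatible[OF assms \<open>?R\<close>[unfolded R_iff]]] by blast
    then show ?L
      unfolding corona_V_def corona_index_def corona_length_def by (intro exI[of _ h]) auto
  qed
qed

end
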